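(* Let $g>0$, $\ell>0$, $p_0<p_1<0$, $[\![\rho]\!]<0$ and a vorticity strength function $\gamma$ be given. If $\Gamma_{\mathrm{rel}}:[p_1,0]\to(0,\infty)$ satisfies the compatibility condition $$\partial_p\big(\Gamma_{\mathrm{rel}}(p)^2\big)=2\gamma(-p),\qquad \ell=\int_{p_1}^0\frac{dp}{\Gamma_{\mathrm{rel}}(p)},$$ then there exists a one-parameter family $\{(H(\cdot;\lambda),Q(\lambda)):\lambda>0\}$ of solutions to the laminar flow problem with $H_p>0$, each member having prescribed relative circulation $\Gamma_{\mathrm{rel}}$ (i.e. $H_p^{-1}=\Gamma_{\mathrm{rel}}$ on $[p_1,0]$). Explicitly $$H(p;\lambda)=\begin{cases}\displaystyle\int_{p_1}^p\frac{dr}{\Gamma_{\mathrm{rel}}(r)}+\frac{p_1-p_0}{\lambda}, & p_1<p<0,\\[2mm]\dfrac{p-p_0}{\lambda}, & p_0<p<p_1,\end{cases}\qquad Q(\lambda)=\frac{2g[\![\rho]\!](p_1-p_0)}{\lambda}+\Gamma_{\mathrm{rel}}(p_1)^2-\lambda^2 .$$ The depth of the fluid at parameter $\lambda$ is $d(\lambda)=H(p_1;\lambda)=\dfrac{p_1-p_0}{\lambda}$ and the width of the channel is $W(\lambda)=\ell+d(\lambda)$.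
   Context: Laminar flow problem: find $Q\in\mathbb R$ and $H\in C([p_0,0])$, $C^2$ on $[p_0,p_1]$ and on $[p_1,0]$, with $H_{pp}=0$ on $(p_0,p_1)$; $H_{pp}=-\gamma(-p)H_p^3$ on $(p_1,0)$; $[\![H_p^{-2}]\!]+2g[\![\rho]\!]H(p_1)-Q=0$; $H(0)=\ell+d(H)$ with $d(H)=H(p_1)$; $H(p_0)=0$. Here $[\![f]\!]=f(p_1^+)-f(p_1^-)$, $[\![\rho]\!]=\rho_{\mathrm{air}}-\rho_{\mathrm{water}}$, $g$ the gravitational constant, and $\gamma$ a given smooth real function (vorticity strength function of the air). *)

theory Defs
  imports "HOL-Analysis.Analysis"
begin

definition smooth_real :: "(real \<Rightarrow> real) \<Rightarrow> bool" where
  "smooth_real f \<longleftrightarrow> (\<exists>D :: nat \<Rightarrow> real \<Rightarrow> real. D 0 = f \<and>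
      (\<forall>n x. (D n has_real_derivative D (Suc n) x) (at x)))"

definition C2_with :: "real \<Rightarrow> real \<Rightarrow> (real \<Rightarrow> real) \<Rightarrow> (real \<Rightarrow> real) \<Rightarrow> (real \<Rightarrow> real) \<Rightarrow> bool" where
  "C2_with a b H D1 D2 \<longleftrightarrow>
     (\<forall>p\<in>{a..b}. (H has_real_derivative D1 p) (at p within {a..b}) \<and>
                 (D1 has_real_derivative D2 p) (at p within {a..b})) \<and>
     continuous_on {a..b} D2"

text \<open>The laminar flow problem. rho_jump stands for [[rho]] = rho_air - rho_water.
  Hl', Hl'' are the derivatives of H on [p0,p1], Hu', Hu'' those on [p1,0];
  [[H_p^{-2}]] = Hu'(p1)^{-2} - Hl'(p1)^{-2}.\<close>
definition laminar_solution_pos ::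
  "real \<Rightarrow> real \<Rightarrow> (real \<Rightarrow> real) \<Rightarrow> real \<Rightarrow> real \<Rightarrow> real \<Rightarrow> real \<Rightarrow> (real \<Rightarrow> real) \<Rightarrow>
   (real \<Rightarrow> real) \<Rightarrow> (real \<Rightarrow> real) \<Rightarrow> bool" where
  "laminar_solution_pos g rho_jump \<gamma> ell p0 p1 Q H Hl' Hu' \<longleftrightarrow>
     continuous_on {p0..0} H \<and>
     (\<exists>Hl'' Hu''.
        C2_with p0 p1 H Hl' Hl'' \<and> C2_with p1 0 H Hu' Hu'' \<and>
        (\<forall>p\<in>{p0<..<p1}. Hl'' p = 0) \<and>
        (\<forall>p\<in>{p1<..<0}. Hu'' p = - \<gamma> (-p) * (Hu' p) ^ 3)) \<and>
     (1 / (Hu' p1)\<^sup>2 - 1 / (Hl' p1)\<^sup>2) + 2 * g * rho_jump * H p1 - Q = 0 \<and>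
     H 0 = ell + H p1 \<and>
     H p0 = 0 \<and>
     (\<forall>p\<in>{p0..p1}. Hl' p > 0) \<and> (\<forall>p\<in>{p1..0}. Hu' p > 0)"

end

theory Submission
  imports Defs
begin

text \<open>Since \<Gamma> > 0 we have \<Gamma> = sqrt(\<Gamma>^2), so the
  compatibility condition (\<Gamma>^2)' = 2\<gamma>(-p) makes 1/\<Gamma> differentiable with derivative
  -\<gamma>(-p)/\<Gamma>^3, which is exactly the vorticity equation H'' = -\<gamma>(-p) H'^3. The jump condition
  then determines Q, and the width condition is the normalisation of \<Gamma>.\<close>

lemma smooth_real_continuous_on:
  assumes "smooth_real f"
  shows "continuous_on S f"
proof -
  obtain D where "D 0 = f" and "\<forall>n x. (D n has_real_derivative D (Suc n) x) (at x)"
    using assms unfolding smooth_real_def by blast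
  then have "isCont f x" for x
    using DERIV_isCont by blast
  then show ?thesis
    by (simp add: continuous_at_imp_continuous_on)
qed

lemma has_real_derivative_from_square:
  fixes \<Gamma> :: "real \<Rightarrow> real"
  assumes pos: "\<forall>y\<in>S. \<Gamma> y > 0" and "x \<in> S"
    and "((\<lambda>q. (\<Gamma> q)\<^sup>2) has_real_derivative D) (at x within S)"
  shows "(\<Gamma> has_real_derivative D / (2 * \<Gamma> x)) (at x within S)"
proof -
  have "\<Gamma> x > 0"
    using pos \<open>x \<in> S\<close> by blast
  then have "((\<lambda>q. sqrt ((\<Gamma> q)\<^sup>2)) has_real_derivative inverse (sqrt ((\<Gamma> x)\<^sup>2)) / 2 * D)
      (at x within S)"
    by (intro DERIV_chain2[OF DERIV_real_sqrt assms(3)]) simp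
  moreover have "inverse (sqrt ((\<Gamma> x)\<^sup>2)) / 2 * D = D / (2 * \<Gamma> x)"
    using \<open>\<Gamma> x > 0\<close> by (simp add: field_simps)
  ultimately have "((\<lambda>q. sqrt ((\<Gamma> q)\<^sup>2)) has_real_derivative D / (2 * \<Gamma> x)) (at x within S)"
    by metis
  then show ?thesis
    by (rule has_field_derivative_transform_within[OF _ zero_less_one \<open>x \<in> S\<close>])
      (use pos in \<open>simp add: abs_of_pos\<close>)
qed

lemma C2_with_cong:
  assumes "\<forall>p\<in>{a..b}. H p = G p" and "C2_with a b G D1 D2"
  shows "C2_with a b H D1 D2"
  using assms unfolding C2_with_def
  by (metis has_field_derivative_transform_within zero_less_one)

lemma C2_with_continuous_on: "C2_with a b H D1 D2 \<Longrightarrow> continuous_on {a..b} H"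
  unfolding C2_with_def continuous_on_eq_continuous_within
  by (blast intro: DERIV_continuous)

lemma C2_with_linear: "C2_with a b (\<lambda>p. (p - c) / m) (\<lambda>_. 1 / m) (\<lambda>_. 0)"
  unfolding C2_with_def divide_inverse by (auto intro!: derivative_eq_intros)

lemma C2_with_integral_inverse:
  fixes \<Gamma> \<omega> :: "real \<Rightarrow> real"
  assumes pos: "\<forall>p\<in>{a..b}. \<Gamma> p > 0"
    and square_deriv: "\<forall>p\<in>{a..b}.
      ((\<lambda>q. (\<Gamma> q)\<^sup>2) has_real_derivative 2 * \<omega> p) (at p within {a..b})"
    and "continuous_on {a..b} \<omega>"
  shows "C2_with a b (\<lambda>p. integral {a..p} (\<lambda>r. 1 / \<Gamma> r) + c)
           (\<lambda>p. 1 / \<Gamma> p) (\<lambda>p. - \<omega> p * (1 / \<Gamma> p) ^ 3)"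
proof -
  have inverse_deriv: "((\<lambda>q. 1 / \<Gamma> q) has_real_derivative - \<omega> p * (1 / \<Gamma> p) ^ 3)
      (at p within {a..b})" if p: "p \<in> {a..b}" for p
  proof -
    have "(\<Gamma> has_real_derivative 2 * \<omega> p / (2 * \<Gamma> p)) (at p within {a..b})"
      using has_real_derivative_from_square[OF pos p] square_deriv p by blast
    moreover have "\<Gamma> p \<noteq> 0"
      using pos p by force
    ultimately have "((\<lambda>q. inverse (\<Gamma> q)) has_real_derivative
        - (inverse (\<Gamma> p) * (2 * \<omega> p / (2 * \<Gamma> p)) * inverse (\<Gamma> p))) (at p within {a..b})"
      by (rule DERIV_inverse')
    moreover have "- (inverse (\<Gamma> p) * (2 * \<omega> p / (2 * \<Gamma> p)) * inverse (\<Gamma> p))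
        = - \<omega> p * (1 / \<Gamma> p) ^ 3"
      using \<open>\<Gamma> p \<noteq> 0\<close> by (simp add: field_simps power3_eq_cube)
    ultimately show ?thesis
      by (simp add: inverse_eq_divide)
  qed
  then have inverse_continuous: "continuous_on {a..b} (\<lambda>r. 1 / \<Gamma> r)"
    unfolding continuous_on_eq_continuous_within by (blast intro: DERIV_continuous)
  show ?thesis
    unfolding C2_with_def
  proof (intro conjI ballI)
    fix p
    assume p: "p \<in> {a..b}"
    show "((\<lambda>p. integral {a..p} (\<lambda>r. 1 / \<Gamma> r) + c) has_real_derivative 1 / \<Gamma> p)
        (at p within {a..b})"
      using DERIV_add[OF integral_has_real_derivative[OF inverse_continuous p] DERIV_const] by simp
    show "((\<lambda>p. 1 / \<Gamma> p) has_real_derivative - \<omega> p * (1 / \<Gamma> p) ^ 3) (at p within {a..b})"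
      using p by (rule inverse_deriv)
  next
    show "continuous_on {a..b} (\<lambda>p. - \<omega> p * (1 / \<Gamma> p) ^ 3)"
      by (intro continuous_on_mult continuous_on_minus continuous_on_power inverse_continuous
          \<open>continuous_on {a..b} \<omega>\<close>)
  qed
qed

definition laminar_profile :: "real \<Rightarrow> real \<Rightarrow> (real \<Rightarrow> real) \<Rightarrow> real \<Rightarrow> real \<Rightarrow> real" where
  "laminar_profile p0 p1 \<Gamma> lam p =
     (if p1 \<le> p then integral {p1..p} (\<lambda>r. 1 / \<Gamma> r) + (p1 - p0) / lam else (p - p0) / lam)"

lemma laminar_profile_interface: "laminar_profile p0 p1 \<Gamma> lam p1 = (p1 - p0) / lam"
  by (simp add: laminar_profile_def)

lemma laminar_profile_solution:
  fixes \<gamma> \<Gamma> :: "real \<Rightarrow> real"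
  assumes "lam > 0" and "p0 < p1" and "p1 < 0"
    and reflected_continuous: "continuous_on {p1..0} (\<lambda>p. \<gamma> (-p))"
    and pos: "\<forall>p\<in>{p1..0}. \<Gamma> p > 0"
    and square_deriv:
      "\<forall>p\<in>{p1..0}. ((\<lambda>q. (\<Gamma> q)\<^sup>2) has_real_derivative 2 * \<gamma> (-p)) (at p within {p1..0})"
    and width: "ell = integral {p1..0} (\<lambda>p. 1 / \<Gamma> p)"
  shows "laminar_solution_pos g rho_jump \<gamma> ell p0 p1
           (2 * g * rho_jump * (p1 - p0) / lam + (\<Gamma> p1)\<^sup>2 - lam\<^sup>2)
           (laminar_profile p0 p1 \<Gamma> lam) (\<lambda>_. 1 / lam) (\<lambda>p. 1 / \<Gamma> p)"
proof -
  let ?H = "laminar_profile p0 p1 \<Gamma> lam"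
  have "\<forall>p\<in>{p0..p1}. ?H p = (p - p0) / lam"
    by (auto simp: laminar_profile_def)
  then have lower: "C2_with p0 p1 ?H (\<lambda>_. 1 / lam) (\<lambda>_. 0)"
    using C2_with_linear by (rule C2_with_cong)
  have "\<forall>p\<in>{p1..0}. ?H p = integral {p1..p} (\<lambda>r. 1 / \<Gamma> r) + (p1 - p0) / lam"
    by (simp add: laminar_profile_def)
  then have upper: "C2_with p1 0 ?H (\<lambda>p. 1 / \<Gamma> p) (\<lambda>p. - \<gamma> (-p) * (1 / \<Gamma> p) ^ 3)"
    using C2_with_integral_inverse[OF pos square_deriv reflected_continuous] by (rule C2_with_cong)
  have "{p0..0} = {p0..p1} \<union> {p1..0}"
    using \<open>p0 < p1\<close> \<open>p1 < 0\<close> by auto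
  then have "continuous_on {p0..0} ?H"
    using continuous_on_closed_Un[OF _ _ lower[THEN C2_with_continuous_on]
        upper[THEN C2_with_continuous_on]] by simp
  moreover have "?H 0 = ell + ?H p1" and "?H p0 = 0"
    using \<open>p0 < p1\<close> \<open>p1 < 0\<close> width by (simp_all add: laminar_profile_def)
  moreover have "1 / (1 / \<Gamma> p1)\<^sup>2 - 1 / (1 / lam)\<^sup>2 + 2 * g * rho_jump * ?H p1
      - (2 * g * rho_jump * (p1 - p0) / lam + (\<Gamma> p1)\<^sup>2 - lam\<^sup>2) = 0"
    by (simp add: laminar_profile_interface power_divide)
  ultimately show ?thesis
    using lower upper \<open>lam > 0\<close> pos unfolding laminar_solution_pos_def by auto
qed

theorem lemma4p2:
  fixes g ell p0 p1 rho_jump :: real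
    and \<gamma> \<Gamma> :: "real \<Rightarrow> real"
  assumes "g > 0" and "ell > 0" and "p0 < p1" and "p1 < 0" and "rho_jump < 0"
    and "smooth_real \<gamma>"
    and "\<forall>p\<in>{p1..0}. \<Gamma> p > 0"
    and "\<forall>p\<in>{p1..0}. ((\<lambda>q. (\<Gamma> q)\<^sup>2) has_real_derivative 2 * \<gamma> (-p)) (at p within {p1..0})"
    and "ell = integral {p1..0} (\<lambda>p. 1 / \<Gamma> p)"
  shows "\<forall>lam>0.
    (let H = (\<lambda>p. if p1 \<le> p then integral {p1..p} (\<lambda>r. 1 / \<Gamma> r) + (p1 - p0) / lam
                 else (p - p0) / lam);
         Q = 2 * g * rho_jump * (p1 - p0) / lam + (\<Gamma> p1)\<^sup>2 - lam\<^sup>2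
     in (\<exists>Hl' Hu'. laminar_solution_pos g rho_jump \<gamma> ell p0 p1 Q H Hl' Hu' \<and>
                   (\<forall>p\<in>{p1..0}. 1 / Hu' p = \<Gamma> p)) \<and>
        H p1 = (p1 - p0) / lam \<and>
        ell + H p1 = ell + (p1 - p0) / lam)"
proof -
  have reflected_continuous: "continuous_on {p1..0} (\<lambda>p. \<gamma> (-p))"
    by (rule continuous_on_compose2[OF smooth_real_continuous_on[OF \<open>smooth_real \<gamma>\<close>]
          continuous_on_minus[OF continuous_on_id]]) auto
  have "\<exists>Hl' Hu'. laminar_solution_pos g rho_jump \<gamma> ell p0 p1
      (2 * g * rho_jump * (p1 - p0) / lam + (\<Gamma> p1)\<^sup>2 - lam\<^sup>2)
      (laminar_profile p0 p1 \<Gamma> lam) Hl' Hu' \<and> (\<forall>p\<in>{p1..0}. 1 / Hu' p = \<Gamma> p)"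
    if "lam > 0" for lam
    using laminar_profile_solution[OF that assms(3,4) reflected_continuous assms(7-9)]
    by (intro exI[of _ "\<lambda>_. 1 / lam"] exI[of _ "\<lambda>p. 1 / \<Gamma> p"]) simp
  then show ?thesis
    unfolding Let_def laminar_profile_def[symmetric]
    by (simp add: laminar_profile_interface)
qed

end
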